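(* Let $\alpha\in(0,1)$ and let $\phi:[0,1]\to[0,\infty)$ be twice continuously differentiable on $(0,1]$ and such that there exist finite constants $W>0$, $c$, $c'$ with $$(2-\alpha)W p^{\alpha-2}+c'\le|\phi^{(2)}(p)|\le(2-\alpha)Wp^{\alpha-2}+c\qquad\text{for all }p\in(0,1].$$ Then for $k\ge3$, $$R^*(n,k;\phi)\gtrsim\frac{k^{2-2\alpha}}{n}.$$
   Context: For an integer $k\ge1$, $\mathcal{M}_k$ denotes the set of probability vectors $P=(p_1,\dots,p_k)$ on $\{1,\dots,k\}$; $\theta(P)=\sum_{i=1}^k\phi(p_i)$. With $N\sim\mathrm{Multinomial}(n,P)$ the histogram of $n$ i.i.d. samples from $P$, $R^*(n,k;\phi)=\inf_{\hat\theta}\sup_{P\in\mathcal{M}_k}\mathbb{E}[(\hat\theta(N)-\theta(P))^2]$, infimum over all real-valued estimators of the histogram. $a\gtrsim b$ means $a\ge Cb$ for a positive constant $C$ not depending on $n,k$ (possibly depending on $\phi,\alpha$). Differentiability at $1$ is one-sided. *)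

theory Defs
  imports "HOL-Analysis.Analysis"
begin

definition prob_vectors :: "nat \<Rightarrow> (nat \<Rightarrow> real) set" where
  "prob_vectors k = {P. (\<forall>i\<in>{1..k}. 0 \<le> P i) \<and> (\<forall>i. i \<notin> {1..k} \<longrightarrow> P i = 0)
                        \<and> (\<Sum>i=1..k. P i) = 1}"

definition histograms :: "nat \<Rightarrow> nat \<Rightarrow> (nat \<Rightarrow> nat) set" where
  "histograms n k = {N. (\<forall>i. i \<notin> {1..k} \<longrightarrow> N i = 0) \<and> (\<Sum>i=1..k. N i) = n}"

definition multinomial_prob :: "nat \<Rightarrow> nat \<Rightarrow> (nat \<Rightarrow> real) \<Rightarrow> (nat \<Rightarrow> nat) \<Rightarrow> real" where
  "multinomial_prob n k P N = fact n / (\<Prod>i=1..k. fact (N i)) * (\<Prod>i=1..k. P i ^ N i)"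

definition functional :: "(real \<Rightarrow> real) \<Rightarrow> nat \<Rightarrow> (nat \<Rightarrow> real) \<Rightarrow> real" where
  "functional \<phi> k P = (\<Sum>i=1..k. \<phi> (P i))"

definition mse :: "nat \<Rightarrow> nat \<Rightarrow> (real \<Rightarrow> real) \<Rightarrow> ((nat \<Rightarrow> nat) \<Rightarrow> real) \<Rightarrow> (nat \<Rightarrow> real) \<Rightarrow> real" where
  "mse n k \<phi> est P = (\<Sum>N\<in>histograms n k. multinomial_prob n k P N * (est N - functional \<phi> k P)\<^sup>2)"

text \<open>Minimax risk R*(n,k;phi), valued in the extended reals (so no junk values for Sup).\<close>
definition minimax_risk :: "nat \<Rightarrow> nat \<Rightarrow> (real \<Rightarrow> real) \<Rightarrow> ereal" where
  "minimax_risk n k \<phi> = (INF est. SUP P\<in>prob_vectors k. ereal (mse n k \<phi> est P))"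

end

theory Submission
  imports Defs
begin

text \<open>Le Cam's two-point method. Let \<open>P\<close> put mass \<open>s = t/k\<close> on \<open>m = (k - 1) div 2\<close> atoms and
  mass \<open>2s\<close> on \<open>m\<close> others (the rest on atom \<open>k\<close>), and let \<open>Q\<close> move \<open>\<eta> = s / (4 \<surd>n)\<close> from every
  heavy atom to a light one. Their Bhattacharyya affinity is at least \<open>1 - 1/(16 n)\<close>, so that of the
  \<open>n\<close>-sample laws is at least \<open>15/16\<close>. Near \<open>0\<close> the second derivative of \<open>\<phi>\<close> has constant sign and
  size at least \<open>W p\<^bsup>\<alpha>-2\<^esup> / 2\<close>, so by the mean value theorem \<open>|\<theta>(P) - \<theta>(Q)|\<close> is at least of
  order \<open>m \<eta> s\<^bsup>\<alpha>-1\<^esup>\<close>, i.e. of order \<open>k\<^bsup>1-\<alpha>\<^esup> / \<surd>n\<close>.\<close>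

section \<open>The multinomial theorem\<close>

lemma histograms_0: "histograms n 0 = (if n = 0 then {\<lambda>_. 0} else {})"
  by (auto simp: histograms_def)

lemma histograms_Suc:
  "histograms n (Suc k) = (\<Union>j\<in>{..n}. (\<lambda>N. N(Suc k := j)) ` histograms (n - j) k)"
proof (intro equalityI subsetI)
  fix N assume N: "N \<in> histograms n (Suc k)"
  define N' where "N' = N(Suc k := 0)"
  have sum_N: "(\<Sum>i=1..k. N i) + N (Suc k) = n"
    using N by (simp add: histograms_def)
  have "(\<Sum>i=1..k. N' i) = (\<Sum>i=1..k. N i)"
    unfolding N'_def by (rule sum.cong) auto
  then have "N' \<in> histograms (n - N (Suc k)) k"
    using N sum_N by (auto simp: histograms_def N'_def)
  moreover have "N = N'(Suc k := N (Suc k))"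
    by (auto simp: N'_def)
  ultimately show "N \<in> (\<Union>j\<in>{..n}. (\<lambda>N. N(Suc k := j)) ` histograms (n - j) k)"
    using sum_N by (intro UN_I[of "N (Suc k)"]) auto
next
  fix N assume "N \<in> (\<Union>j\<in>{..n}. (\<lambda>N. N(Suc k := j)) ` histograms (n - j) k)"
  then obtain j N' where j: "j \<le> n" and N': "N' \<in> histograms (n - j) k"
    and N_eq: "N = N'(Suc k := j)" by auto
  have "(\<Sum>i=1..k. N i) = (\<Sum>i=1..k. N' i)"
    unfolding N_eq by (rule sum.cong) auto
  then show "N \<in> histograms n (Suc k)"
    using N' j N_eq by (auto simp: histograms_def)
qed

lemma finite_histograms: "finite (histograms n k)"
  by (induction k arbitrary: n) (simp_all add: histograms_0 histograms_Suc)

lemma inj_on_fun_upd_histograms: "inj_on (\<lambda>N. N(Suc k := j)) (histograms m k)"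
proof (rule inj_onI)
  fix N1 N2 assume N: "N1 \<in> histograms m k" "N2 \<in> histograms m k"
    and eq: "N1(Suc k := j) = N2(Suc k := j)"
  show "N1 = N2"
  proof
    fix i show "N1 i = N2 i"
      using N fun_cong[OF eq, of i] by (cases "i = Suc k") (auto simp: histograms_def)
  qed
qed

theorem multinomial_theorem:
  fixes x :: "nat \<Rightarrow> real"
  shows "(\<Sum>N\<in>histograms n k. fact n / (\<Prod>i=1..k. fact (N i)) * (\<Prod>i=1..k. x i ^ N i))
           = (\<Sum>i=1..k. x i) ^ n"
proof (induction k arbitrary: n)
  case 0
  then show ?case by (simp add: histograms_0)
next
  case (Suc k)
  let ?term = "\<lambda>n k N. fact n / (\<Prod>i=1..k. fact (N i)) * (\<Prod>i=1..k. x i ^ N i) :: real"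
  have term_upd: "?term n (Suc k) (N(Suc k := j)) = of_nat (n choose j) * x (Suc k) ^ j * ?term (n - j) k N"
    if "j \<le> n" for N j
  proof -
    have "(\<Prod>i=1..k. fact ((N(Suc k := j)) i)) = (\<Prod>i=1..k. fact (N i) :: real)"
      "(\<Prod>i=1..k. x i ^ (N(Suc k := j)) i) = (\<Prod>i=1..k. x i ^ N i)"
      by (auto intro: prod.cong)
    moreover have "(\<Prod>i=1..k. fact (N i) :: real) > 0"
      by (rule prod_pos) auto
    ultimately show ?thesis
      using that by (simp add: binomial_fact field_simps)
  qed
  have "(\<Sum>N\<in>histograms n (Suc k). ?term n (Suc k) N)
      = (\<Sum>j\<le>n. \<Sum>N\<in>histograms (n - j) k. ?term n (Suc k) (N(Suc k := j)))"
    unfolding histograms_Suc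
    by (subst sum.UNION_disjoint)
       (auto simp: finite_histograms sum.reindex[OF inj_on_fun_upd_histograms], metis fun_upd_same)
  also have "\<dots> = (\<Sum>j\<le>n. of_nat (n choose j) * x (Suc k) ^ j * (\<Sum>i=1..k. x i) ^ (n - j))"
  proof (rule sum.cong[OF refl])
    fix j assume "j \<in> {..n}"
    then show "(\<Sum>N\<in>histograms (n - j) k. ?term n (Suc k) (N(Suc k := j)))
        = of_nat (n choose j) * x (Suc k) ^ j * (\<Sum>i=1..k. x i) ^ (n - j)"
      by (simp only: term_upd atMost_iff sum_distrib_left[symmetric] Suc.IH)
  qed
  also have "\<dots> = (\<Sum>i=1..Suc k. x i) ^ n"
    by (simp add: binomial_ring add.commute)
  finally show ?case .
qed

section \<open>Le Cam's two-point bound\<close>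

lemma sum_multinomial_prob: "(\<Sum>N\<in>histograms n k. multinomial_prob n k P N) = (\<Sum>i=1..k. P i) ^ n"
  unfolding multinomial_prob_def by (rule multinomial_theorem)

lemma multinomial_prob_nonneg:
  assumes "\<forall>i\<in>{1..k}. 0 \<le> P i"
  shows "0 \<le> multinomial_prob n k P N"
  unfolding multinomial_prob_def using assms
  by (intro mult_nonneg_nonneg divide_nonneg_nonneg prod_nonneg) auto

lemma sqrt_multinomial_prob_mult:
  assumes "\<forall>i\<in>{1..k}. 0 \<le> P i" "\<forall>i\<in>{1..k}. 0 \<le> Q i"
  shows "sqrt (multinomial_prob n k P N * multinomial_prob n k Q N)
       = multinomial_prob n k (\<lambda>i. sqrt (P i * Q i)) N"
proof -
  define c where "c = fact n / (\<Prod>i=1..k. fact (N i) :: real)"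
  define g where "g = (\<Prod>i=1..k. sqrt (P i * Q i) ^ N i)"
  have c_nonneg: "0 \<le> c" and g_nonneg: "0 \<le> g"
    unfolding c_def g_def using assms
    by (auto intro!: divide_nonneg_nonneg prod_nonneg zero_le_power mult_nonneg_nonneg)
  have sqrt_pow: "(sqrt y ^ m)\<^sup>2 = y ^ m" if "0 \<le> y" for y :: real and m
    using that by (simp add: power_even_eq[symmetric] power_mult)
  have "(\<Prod>i=1..k. P i ^ N i) * (\<Prod>i=1..k. Q i ^ N i) = (\<Prod>i=1..k. (sqrt (P i * Q i) ^ N i)\<^sup>2)"
    unfolding prod.distrib[symmetric] using assms
    by (intro prod.cong) (auto simp: sqrt_pow power_mult_distrib)
  also have "\<dots> = g\<^sup>2"
    by (simp add: g_def prod_power_distrib)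
  finally have "multinomial_prob n k P N * multinomial_prob n k Q N = (c * g)\<^sup>2"
    unfolding multinomial_prob_def c_def[symmetric] by (simp add: power2_eq_square algebra_simps)
  then show ?thesis
    using c_nonneg g_nonneg unfolding multinomial_prob_def c_def[symmetric] g_def[symmetric] by simp
qed

lemma sqrt_mult_le_min_add:
  fixes a b :: real
  assumes "0 \<le> a" "0 \<le> b"
  shows "sqrt (a * b) \<le> min a b + (a + b) / 4"
proof -
  have "a * b \<le> (min a b + max a b / 4)\<^sup>2"
    using sum_power2_ge_zero[of "min a b - max a b / 4" 0]
    by (cases "a \<le> b") (auto simp: min_def max_def power2_eq_square algebra_simps)
  then have "sqrt (a * b) \<le> min a b + max a b / 4"
    using assms by (intro real_le_lsqrt) auto
  also have "\<dots> \<le> min a b + (a + b) / 4"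
    using assms by (simp add: divide_right_mono)
  finally show ?thesis .
qed

text \<open>The overlap \<open>\<Sum>x\<in>H. min (a x) (b x)\<close> is at least \<open>B - 1/2\<close>, and on it every estimate pays
  \<open>(u - v)\<^sup>2 / 2\<close>.\<close>
lemma le_cam_two_point:
  fixes a b e :: "'x \<Rightarrow> real" and u v B :: real
  assumes "finite H" and nonneg: "\<And>x. x \<in> H \<Longrightarrow> 0 \<le> a x" "\<And>x. x \<in> H \<Longrightarrow> 0 \<le> b x"
    and sum_a: "(\<Sum>x\<in>H. a x) = 1" and sum_b: "(\<Sum>x\<in>H. b x) = 1"
    and affinity: "B \<le> (\<Sum>x\<in>H. sqrt (a x * b x))"
  shows "(B - 1/2) * (u - v)\<^sup>2 / 2 \<le> (\<Sum>x\<in>H. a x * (e x - u)\<^sup>2) + (\<Sum>x\<in>H. b x * (e x - v)\<^sup>2)"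
proof -
  have "(\<Sum>x\<in>H. sqrt (a x * b x)) \<le> (\<Sum>x\<in>H. min (a x) (b x) + (a x + b x) / 4)"
    by (rule sum_mono) (use sqrt_mult_le_min_add nonneg in auto)
  with affinity have "B \<le> (\<Sum>x\<in>H. min (a x) (b x) + (a x + b x) / 4)"
    by linarith
  also have "\<dots> = (\<Sum>x\<in>H. min (a x) (b x)) + 1/2"
    by (simp add: sum.distrib sum_divide_distrib[symmetric] sum_a sum_b)
  finally have overlap: "B - 1/2 \<le> (\<Sum>x\<in>H. min (a x) (b x))"
    by simp
  have pointwise: "min (a x) (b x) * ((u - v)\<^sup>2 / 2) \<le> a x * (e x - u)\<^sup>2 + b x * (e x - v)\<^sup>2"
    if "x \<in> H" for x
  proof -
    have "(e x - u)\<^sup>2 + (e x - v)\<^sup>2 = (u - v)\<^sup>2 / 2 + (2 * e x - u - v)\<^sup>2 / 2"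
      by (simp add: power2_eq_square field_simps)
    then have "(u - v)\<^sup>2 / 2 \<le> (e x - u)\<^sup>2 + (e x - v)\<^sup>2"
      by (simp add: add_increasing2)
    then have "min (a x) (b x) * ((u - v)\<^sup>2 / 2) \<le> min (a x) (b x) * ((e x - u)\<^sup>2 + (e x - v)\<^sup>2)"
      using nonneg that by (intro mult_left_mono) auto
    also have "\<dots> \<le> a x * (e x - u)\<^sup>2 + b x * (e x - v)\<^sup>2"
      by (simp add: distrib_left min_def mult_right_mono)
    finally show ?thesis .
  qed
  have "(B - 1/2) * (u - v)\<^sup>2 / 2 \<le> (\<Sum>x\<in>H. min (a x) (b x)) * ((u - v)\<^sup>2 / 2)"
    using overlap by (simp add: mult_right_mono)
  also have "\<dots> \<le> (\<Sum>x\<in>H. a x * (e x - u)\<^sup>2 + b x * (e x - v)\<^sup>2)"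
    unfolding sum_distrib_right using pointwise by (rule sum_mono)
  finally show ?thesis
    by (simp add: sum.distrib)
qed

lemma minimax_risk_ge_two_point:
  assumes P: "P \<in> prob_vectors k" and Q: "Q \<in> prob_vectors k"
    and affinity: "B \<le> (\<Sum>i=1..k. sqrt (P i * Q i)) ^ n"
  shows "ereal ((B - 1/2) * (functional \<phi> k P - functional \<phi> k Q)\<^sup>2 / 4) \<le> minimax_risk n k \<phi>"
  unfolding minimax_risk_def
proof (rule INF_greatest)
  fix est :: "(nat \<Rightarrow> nat) \<Rightarrow> real"
  have P_nonneg: "\<forall>i\<in>{1..k}. 0 \<le> P i" and P_sum: "(\<Sum>i=1..k. P i) = 1"
    and Q_nonneg: "\<forall>i\<in>{1..k}. 0 \<le> Q i" and Q_sum: "(\<Sum>i=1..k. Q i) = 1"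
    using P Q by (auto simp: prob_vectors_def)
  have "(B - 1/2) * (functional \<phi> k P - functional \<phi> k Q)\<^sup>2 / 2 \<le> mse n k \<phi> est P + mse n k \<phi> est Q"
    unfolding mse_def
  proof (rule le_cam_two_point[OF finite_histograms])
    show "\<And>N. 0 \<le> multinomial_prob n k P N" "\<And>N. 0 \<le> multinomial_prob n k Q N"
      using multinomial_prob_nonneg P_nonneg Q_nonneg by auto
    show "(\<Sum>N\<in>histograms n k. multinomial_prob n k P N) = 1"
      "(\<Sum>N\<in>histograms n k. multinomial_prob n k Q N) = 1"
      by (simp_all only: sum_multinomial_prob P_sum Q_sum power_one)
    show "B \<le> (\<Sum>N\<in>histograms n k. sqrt (multinomial_prob n k P N * multinomial_prob n k Q N))"
      using affinity by (simp only: sqrt_multinomial_prob_mult[OF P_nonneg Q_nonneg] sum_multinomial_prob)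
  qed
  then have "(B - 1/2) * (functional \<phi> k P - functional \<phi> k Q)\<^sup>2 / 4 \<le> mse n k \<phi> est P
    \<or> (B - 1/2) * (functional \<phi> k P - functional \<phi> k Q)\<^sup>2 / 4 \<le> mse n k \<phi> est Q"
    by linarith
  moreover have "ereal (mse n k \<phi> est P) \<le> (SUP P\<in>prob_vectors k. ereal (mse n k \<phi> est P))"
    "ereal (mse n k \<phi> est Q) \<le> (SUP P\<in>prob_vectors k. ereal (mse n k \<phi> est P))"
    using P Q by (auto intro: SUP_upper)
  ultimately show "ereal ((B - 1/2) * (functional \<phi> k P - functional \<phi> k Q)\<^sup>2 / 4)
      \<le> (SUP P\<in>prob_vectors k. ereal (mse n k \<phi> est P))"
    by (auto intro: order_trans[rotated])
qed

section \<open>Curvature near zero\<close>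

lemma continuous_on_nonzero_same_sign:
  fixes g :: "real \<Rightarrow> real"
  assumes "a \<le> b" "continuous_on {a..b} g" "\<forall>x\<in>{a..b}. g x \<noteq> 0"
  shows "0 < g a * g b"
proof (rule ccontr)
  assume "\<not> 0 < g a * g b"
  then have "g a \<le> 0 \<and> 0 \<le> g b \<or> g b \<le> 0 \<and> 0 \<le> g a"
    by (auto simp: zero_less_mult_iff not_less)
  then obtain x where "a \<le> x" "x \<le> b" "g x = 0"
    using IVT'[of g a 0 b] IVT2'[of g b 0 a] assms(1,2) by blast
  then show False
    using assms(3) by auto
qed

lemma curvature_lower_bound_near_zero:
  fixes g :: "real \<Rightarrow> real"
  assumes "\<alpha> \<le> 1" "0 < W"
    and bound: "\<forall>p\<in>{0<..1}. (2 - \<alpha>) * W * p powr (\<alpha> - 2) + c \<le> \<bar>g p\<bar>"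
  shows "\<exists>p0>0. \<forall>p\<in>{0<..p0}. W / 2 * p powr (\<alpha> - 2) < \<bar>g p\<bar>"
proof (intro exI conjI ballI)
  define p0 where "p0 = min 1 (W / (2 * (\<bar>c\<bar> + 1)))"
  show "0 < p0"
    using \<open>0 < W\<close> by (simp add: p0_def)
  fix p assume p: "p \<in> {0<..p0}"
  then have "0 < p" "p \<le> 1" "2 * p * (\<bar>c\<bar> + 1) \<le> W"
    by (auto simp: p0_def field_simps)
  have "1 / p \<le> p powr (\<alpha> - 2)"
    using powr_mono'[of "\<alpha> - 2" "-1" p] \<open>0 < p\<close> \<open>p \<le> 1\<close> \<open>\<alpha> \<le> 1\<close> by (simp add: powr_minus_divide)
  have "\<bar>c\<bar> + 1 \<le> W / 2 * (1 / p)"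
    using \<open>0 < p\<close> \<open>2 * p * (\<bar>c\<bar> + 1) \<le> W\<close> by (simp add: field_simps)
  also have "\<dots> \<le> W / 2 * p powr (\<alpha> - 2)"
    using \<open>1 / p \<le> p powr (\<alpha> - 2)\<close> \<open>0 < W\<close> by (intro mult_left_mono) auto
  finally have "\<bar>c\<bar> + 1 \<le> W / 2 * p powr (\<alpha> - 2)" .
  moreover have "W * p powr (\<alpha> - 2) \<le> (2 - \<alpha>) * W * p powr (\<alpha> - 2)"
    using \<open>\<alpha> \<le> 1\<close> \<open>0 < W\<close> by (simp add: mult_right_mono)
  moreover have "(2 - \<alpha>) * W * p powr (\<alpha> - 2) + c \<le> \<bar>g p\<bar>"
    using bound \<open>0 < p\<close> \<open>p \<le> 1\<close> by simp
  ultimately show "W / 2 * p powr (\<alpha> - 2) < \<bar>g p\<bar>"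
    using abs_ge_minus_self[of c] by linarith
qed

lemma curvature_sign_near_zero:
  fixes g :: "real \<Rightarrow> real"
  assumes "\<alpha> \<le> 1" "0 < W" and cont: "continuous_on {0<..1} g"
    and bound: "\<forall>p\<in>{0<..1}. (2 - \<alpha>) * W * p powr (\<alpha> - 2) + c \<le> \<bar>g p\<bar>"
  shows "\<exists>p0>0. \<exists>\<sigma>. \<bar>\<sigma>\<bar> = 1 \<and> (\<forall>x\<in>{0<..p0}. W / 2 * x powr (\<alpha> - 2) \<le> \<sigma> * g x)"
proof -
  obtain p0 where "0 < p0" and low: "\<forall>p\<in>{0<..p0}. W / 2 * p powr (\<alpha> - 2) < \<bar>g p\<bar>"
    using curvature_lower_bound_near_zero[OF assms(1,2) bound] by blast
  define p1 where "p1 = min p0 1"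
  have "0 < p1"
    using \<open>0 < p0\<close> by (simp add: p1_def)
  have nonzero: "g x \<noteq> 0" if "x \<in> {0<..p1}" for x
  proof -
    have "W / 2 * x powr (\<alpha> - 2) < \<bar>g x\<bar>"
      using low that by (simp add: p1_def)
    moreover have "0 \<le> W / 2 * x powr (\<alpha> - 2)"
      using \<open>0 < W\<close> by simp
    ultimately show ?thesis
      by auto
  qed
  have same_sign: "sgn (g p1) * g x = \<bar>g x\<bar>" if x: "x \<in> {0<..p1}" for x
  proof -
    have "continuous_on {x..p1} g"
      using x by (intro continuous_on_subset[OF cont]) (auto simp: p1_def)
    moreover have "\<forall>y\<in>{x..p1}. g y \<noteq> 0"
      using x nonzero by auto
    ultimately have "0 < g x * g p1"
      using x by (intro continuous_on_nonzero_same_sign) auto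
    then show ?thesis
      by (auto simp: sgn_if zero_less_mult_iff)
  qed
  have "\<bar>sgn (g p1)\<bar> = 1"
    using nonzero \<open>0 < p1\<close> by (simp add: abs_sgn)
  moreover have "W / 2 * x powr (\<alpha> - 2) \<le> sgn (g p1) * g x" if "x \<in> {0<..p1}" for x
  proof -
    have "x \<in> {0<..p0}"
      using that by (simp add: p1_def)
    then show ?thesis
      using less_imp_le[OF bspec[OF low]] same_sign[OF that] by simp
  qed
  ultimately show ?thesis
    using \<open>0 < p1\<close> by blast
qed

lemma second_difference_inward_ge:
  fixes f f' f'' :: "real \<Rightarrow> real"
  assumes "0 < \<eta>" "4 * \<eta> \<le> b - a" "0 \<le> L"
    and f': "\<forall>x\<in>{a..b}. (f has_real_derivative f' x) (at x)"
    and f'': "\<forall>x\<in>{a..b}. (f' has_real_derivative f'' x) (at x)"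
    and curv: "\<forall>x\<in>{a..b}. L \<le> f'' x"
  shows "\<eta> * ((b - a) / 2) * L \<le> f a + f b - f (a + \<eta>) - f (b - \<eta>)"
proof -
  have slope_gap: "(b - a) / 2 * L \<le> f' (b - x) - f' (a + x)" if x: "0 \<le> x" "x \<le> \<eta>" for x
  proof -
    have "a + x < b - x"
      using x assms(1,2) by linarith
    moreover have "DERIV f' y :> f'' y" if "a + x \<le> y" "y \<le> b - x" for y
      using f'' x that by auto
    ultimately obtain z where z: "a + x < z" "z < b - x"
      and mvt: "f' (b - x) - f' (a + x) = ((b - x) - (a + x)) * f'' z"
      using MVT2 by blast
    have "(b - a) / 2 * L \<le> ((b - x) - (a + x)) * f'' z"
      using curv z x assms(2,3) by (intro mult_mono) auto
    then show ?thesis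
      using mvt by simp
  qed
  define \<psi> where "\<psi> x = f (a + x) + f (b - x)" for x
  have \<psi>_deriv: "DERIV \<psi> x :> f' (a + x) - f' (b - x)" if "0 \<le> x" "x \<le> \<eta>" for x
  proof -
    have "a + x \<in> {a..b}" "b - x \<in> {a..b}"
      using that assms(1,2) by auto
    have "DERIV (\<lambda>x. f (a + x)) x :> f' (a + x) * 1"
      by (rule DERIV_chain2[where g = "\<lambda>x. a + x", OF f'[rule_format, OF \<open>a + x \<in> {a..b}\<close>]])
        (auto intro!: derivative_eq_intros)
    moreover have "DERIV (\<lambda>x. f (b - x)) x :> f' (b - x) * (- 1)"
      by (rule DERIV_chain2[where g = "\<lambda>x. b - x", OF f'[rule_format, OF \<open>b - x \<in> {a..b}\<close>]])
        (auto intro!: derivative_eq_intros)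
    ultimately have "DERIV \<psi> x :> f' (a + x) * 1 + f' (b - x) * (- 1)"
      unfolding \<psi>_def by (rule DERIV_add)
    then show ?thesis
      by simp
  qed
  obtain z where z: "0 < z" "z < \<eta>" and mvt: "\<psi> \<eta> - \<psi> 0 = (\<eta> - 0) * (f' (a + z) - f' (b - z))"
    using MVT2[OF \<open>0 < \<eta>\<close> \<psi>_deriv] by blast
  have "\<eta> * ((b - a) / 2 * L) \<le> \<eta> * (f' (b - z) - f' (a + z))"
    using slope_gap[of z] z by (intro mult_left_mono) auto
  then show ?thesis
    using mvt by (simp add: \<psi>_def algebra_simps)
qed

section \<open>The two-point construction\<close>

lemma sqrt_add_two_sqrt_ge:
  fixes \<delta> :: real
  assumes "0 \<le> \<delta>" "\<delta> \<le> 1/4"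
  shows "3 - \<delta>\<^sup>2 \<le> sqrt (1 + \<delta>) + 2 * sqrt (1 - \<delta> / 2)"
proof -
  have "\<delta>\<^sup>2 \<le> 1"
    using assms by (simp add: power_le_one)
  have "(1 + \<delta> / 2 - \<delta>\<^sup>2 / 2)\<^sup>2 = 1 + \<delta> - \<delta>\<^sup>2 * (3/4 + \<delta> / 2 - \<delta>\<^sup>2 / 4)"
    by (simp add: power2_eq_square field_simps)
  also have "\<dots> \<le> 1 + \<delta>"
    using assms \<open>\<delta>\<^sup>2 \<le> 1\<close> by simp
  finally have left: "1 + \<delta> / 2 - \<delta>\<^sup>2 / 2 \<le> sqrt (1 + \<delta>)"
    by (rule real_le_rsqrt)
  have "(1 - \<delta> / 4 - \<delta>\<^sup>2 / 4)\<^sup>2 = 1 - \<delta> / 2 - \<delta>\<^sup>2 * (7/16 - \<delta> / 8 - \<delta>\<^sup>2 / 16)"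
    by (simp add: power2_eq_square field_simps)
  also have "\<dots> \<le> 1 - \<delta> / 2"
    using assms \<open>\<delta>\<^sup>2 \<le> 1\<close> by simp
  finally have right: "1 - \<delta> / 4 - \<delta>\<^sup>2 / 4 \<le> sqrt (1 - \<delta> / 2)"
    by (rule real_le_rsqrt)
  show ?thesis
    using left right by linarith
qed

definition two_block_vector :: "nat \<Rightarrow> nat \<Rightarrow> real \<Rightarrow> real \<Rightarrow> nat \<Rightarrow> real" where
  "two_block_vector k m a b i =
     (if i \<in> {1..m} then a else if i \<in> {m<..2*m} then b
      else if i = k then 1 - real m * (a + b) else 0)"

lemma sum_two_block_vector_pair:
  fixes h :: "real \<Rightarrow> real \<Rightarrow> real"
  assumes "2 * m < k" "a + b = a' + b'"
  shows "(\<Sum>i=1..k. h (two_block_vector k m a b i) (two_block_vector k m a' b' i))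
       = real m * h a a' + real m * h b b' + h (1 - real m * (a + b)) (1 - real m * (a + b))
         + real (k - 2 * m - 1) * h 0 0"
proof -
  define v where "v i = h (two_block_vector k m a b i) (two_block_vector k m a' b' i)" for i
  have blocks: "{1..k} = insert k ({1..m} \<union> ({m<..2*m} \<union> {2*m<..<k}))"
    using assms(1) by auto
  have "sum v {1..k} = v k + sum v ({1..m} \<union> ({m<..2*m} \<union> {2*m<..<k}))"
    unfolding blocks using assms(1) by (intro sum.insert) auto
  also have "sum v ({1..m} \<union> ({m<..2*m} \<union> {2*m<..<k})) = sum v {1..m} + sum v ({m<..2*m} \<union> {2*m<..<k})"
    by (intro sum.union_disjoint) auto
  also have "sum v ({m<..2*m} \<union> {2*m<..<k}) = sum v {m<..2*m} + sum v {2*m<..<k}"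
    by (intro sum.union_disjoint) auto
  also have "sum v {1..m} = real m * h a a'"
    by (simp add: v_def two_block_vector_def)
  also have "sum v {m<..2*m} = real m * h b b'"
    by (simp add: v_def two_block_vector_def)
  also have "sum v {2*m<..<k} = real (k - 2 * m - 1) * h 0 0"
    using assms(1) by (simp add: v_def two_block_vector_def)
  also have "v k = h (1 - real m * (a + b)) (1 - real m * (a + b))"
    using assms by (simp add: v_def two_block_vector_def)
  finally show ?thesis
    by (simp add: v_def algebra_simps)
qed

lemma two_block_vector_in_prob_vectors:
  assumes "2 * m < k" "0 \<le> a" "0 \<le> b" "real m * (a + b) \<le> 1"
  shows "two_block_vector k m a b \<in> prob_vectors k"
proof -
  have "(\<Sum>i=1..k. two_block_vector k m a b i) = 1"
    using sum_two_block_vector_pair[OF assms(1), of a b a b "\<lambda>x y. x"] by (simp add: algebra_simps)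
  then show ?thesis
    using assms by (auto simp: prob_vectors_def two_block_vector_def)
qed

lemma two_block_affinity_ge:
  assumes "2 * m < k" "0 < s" "3 * real m * s \<le> 1" "0 \<le> \<delta>" "\<delta> \<le> 1/4"
  shows "1 - \<delta>\<^sup>2 \<le> (\<Sum>i=1..k. sqrt (two_block_vector k m s (2 * s) i
                                * two_block_vector k m (s + \<delta> * s) (2 * s - \<delta> * s) i))"
    (is "_ \<le> ?affinity")
proof -
  have "s * (s + \<delta> * s) = s\<^sup>2 * (1 + \<delta>)" "2 * s * (2 * s - \<delta> * s) = (2 * s)\<^sup>2 * (1 - \<delta> / 2)"
    by (simp_all add: power2_eq_square algebra_simps)
  then have "sqrt (s * (s + \<delta> * s)) = s * sqrt (1 + \<delta>)"
    "sqrt (2 * s * (2 * s - \<delta> * s)) = 2 * s * sqrt (1 - \<delta> / 2)"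
    using \<open>0 < s\<close> by (simp_all only: real_sqrt_mult real_sqrt_abs)
  moreover have "?affinity
      = real m * sqrt (s * (s + \<delta> * s)) + real m * sqrt (2 * s * (2 * s - \<delta> * s))
        + sqrt ((1 - real m * (s + 2 * s)) * (1 - real m * (s + 2 * s))) + real (k - 2 * m - 1) * sqrt (0 * 0)"
    by (rule sum_two_block_vector_pair) (use assms(1) in simp_all)
  moreover have "sqrt ((1 - real m * (s + 2 * s)) * (1 - real m * (s + 2 * s))) = 1 - 3 * real m * s"
    using assms(3) by simp
  ultimately have affinity_eq: "?affinity = real m * s * (sqrt (1 + \<delta>) + 2 * sqrt (1 - \<delta> / 2)) + (1 - 3 * real m * s)"
    by (simp add: algebra_simps)
  have "1 - \<delta>\<^sup>2 \<le> 1 - real m * s * \<delta>\<^sup>2"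
    using assms(3) \<open>0 < s\<close> by (simp add: mult_left_le_one_le)
  also have "\<dots> = real m * s * (3 - \<delta>\<^sup>2) + (1 - 3 * real m * s)"
    by (simp add: algebra_simps)
  also have "\<dots> \<le> real m * s * (sqrt (1 + \<delta>) + 2 * sqrt (1 - \<delta> / 2)) + (1 - 3 * real m * s)"
    using sqrt_add_two_sqrt_ge[OF assms(4,5)] \<open>0 < s\<close> by (simp add: mult_left_mono)
  finally show ?thesis
    unfolding affinity_eq .
qed

text \<open>The constant is \<open>(15/16 - 1/2) / 4\<close>, where \<open>15/16\<close> bounds the \<open>n\<close>-fold affinity from below.\<close>
lemma minimax_risk_ge_two_block_gap:
  fixes \<phi> :: "real \<Rightarrow> real" and s :: real
  assumes "2 * m < k" "0 < s" "3 * real m * s \<le> 1" "1 \<le> n"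
  defines "\<eta> \<equiv> s / (4 * sqrt (real n))"
  shows "ereal (7/64 * (real m * (\<phi> s + \<phi> (2 * s) - \<phi> (s + \<eta>) - \<phi> (2 * s - \<eta>)))\<^sup>2)
           \<le> minimax_risk n k \<phi>"
proof -
  define \<delta> where "\<delta> = 1 / (4 * sqrt (real n))"
  have \<eta>: "\<eta> = \<delta> * s"
    by (simp add: \<eta>_def \<delta>_def)
  have "0 < \<delta>" "\<delta> \<le> 1/4" "real n * \<delta>\<^sup>2 = 1/16"
    using \<open>1 \<le> n\<close> by (auto simp: \<delta>_def power2_eq_square field_simps)
  define P where "P = two_block_vector k m s (2 * s)"
  define Q where "Q = two_block_vector k m (s + \<eta>) (2 * s - \<eta>)"
  have "\<eta> \<le> s"
    using \<eta> \<open>\<delta> \<le> 1/4\<close> \<open>0 < s\<close> by simp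
  then have PQ: "P \<in> prob_vectors k" "Q \<in> prob_vectors k"
    using assms(1-3) \<eta> \<open>0 < \<delta>\<close> unfolding P_def Q_def
    by (auto intro!: two_block_vector_in_prob_vectors)
  have "1 - \<delta>\<^sup>2 \<le> (\<Sum>i=1..k. sqrt (P i * Q i))"
    unfolding P_def Q_def \<eta> using assms(1-3) \<open>0 < \<delta>\<close> \<open>\<delta> \<le> 1/4\<close> by (intro two_block_affinity_ge) auto
  have "\<delta>\<^sup>2 \<le> 1"
    using \<open>0 < \<delta>\<close> \<open>\<delta> \<le> 1/4\<close> by (simp add: power_le_one)
  then have "15/16 \<le> (1 - \<delta>\<^sup>2) ^ n"
    using Bernoulli_inequality[of "- \<delta>\<^sup>2" n] \<open>real n * \<delta>\<^sup>2 = 1/16\<close> by simp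
  also have "\<dots> \<le> (\<Sum>i=1..k. sqrt (P i * Q i)) ^ n"
    using \<open>1 - \<delta>\<^sup>2 \<le> (\<Sum>i=1..k. sqrt (P i * Q i))\<close> \<open>\<delta>\<^sup>2 \<le> 1\<close> by (simp add: power_mono)
  finally have affinity: "15/16 \<le> (\<Sum>i=1..k. sqrt (P i * Q i)) ^ n" .
  have "functional \<phi> k P - functional \<phi> k Q = real m * (\<phi> s + \<phi> (2 * s) - \<phi> (s + \<eta>) - \<phi> (2 * s - \<eta>))"
    using assms(1) sum_two_block_vector_pair[of m k s "2 * s" "s + \<eta>" "2 * s - \<eta>" "\<lambda>x y. \<phi> x - \<phi> y"]
    unfolding functional_def P_def Q_def by (simp add: sum_subtractf algebra_simps)
  then show ?thesis
    using minimax_risk_ge_two_point[OF PQ affinity, of \<phi>] by simp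
qed

lemma second_difference_ge_of_curvature:
  fixes \<phi> \<phi>' \<phi>'' :: "real \<Rightarrow> real" and \<sigma> L \<alpha> p0 s \<eta> :: real
  assumes "\<bar>\<sigma>\<bar> = 1" "0 < L" "\<alpha> \<le> 2" "0 < s" "2 * s < 1" "2 * s \<le> p0" "0 < \<eta>" "4 * \<eta> \<le> s"
    and deriv: "\<forall>x\<in>{0<..<1}. (\<phi> has_real_derivative \<phi>' x) (at x) \<and> (\<phi>' has_real_derivative \<phi>'' x) (at x)"
    and curv: "\<forall>x\<in>{0<..p0}. L * x powr (\<alpha> - 2) \<le> \<sigma> * \<phi>'' x"
  shows "\<eta> * (s / 2) * (L * (2 * s) powr (\<alpha> - 2)) \<le> \<bar>\<phi> s + \<phi> (2 * s) - \<phi> (s + \<eta>) - \<phi> (2 * s - \<eta>)\<bar>"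
proof -
  have interval: "x \<in> {0<..<1}" "x \<in> {0<..p0}" if "x \<in> {s..2 * s}" for x
    using that assms(4-6) by auto
  have "\<eta> * ((2 * s - s) / 2) * (L * (2 * s) powr (\<alpha> - 2))
      \<le> \<sigma> * \<phi> s + \<sigma> * \<phi> (2 * s) - \<sigma> * \<phi> (s + \<eta>) - \<sigma> * \<phi> (2 * s - \<eta>)"
  proof (rule second_difference_inward_ge)
    show "0 < \<eta>" "4 * \<eta> \<le> 2 * s - s" "0 \<le> L * (2 * s) powr (\<alpha> - 2)"
      using assms(2,7,8) by auto
    show "\<forall>x\<in>{s..2 * s}. ((\<lambda>x. \<sigma> * \<phi> x) has_real_derivative \<sigma> * \<phi>' x) (at x)"
      "\<forall>x\<in>{s..2 * s}. ((\<lambda>x. \<sigma> * \<phi>' x) has_real_derivative \<sigma> * \<phi>'' x) (at x)"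
      using deriv interval(1) by (auto intro: DERIV_cmult)
    show "\<forall>x\<in>{s..2 * s}. L * (2 * s) powr (\<alpha> - 2) \<le> \<sigma> * \<phi>'' x"
    proof
      fix x assume x: "x \<in> {s..2 * s}"
      have "L * (2 * s) powr (\<alpha> - 2) \<le> L * x powr (\<alpha> - 2)"
        using x assms(2-4) by (intro mult_left_mono powr_mono2') auto
      also have "\<dots> \<le> \<sigma> * \<phi>'' x"
        using curv interval(2)[OF x] by blast
      finally show "L * (2 * s) powr (\<alpha> - 2) \<le> \<sigma> * \<phi>'' x" .
    qed
  qed
  also have "\<dots> = \<sigma> * (\<phi> s + \<phi> (2 * s) - \<phi> (s + \<eta>) - \<phi> (2 * s - \<eta>))"
    by (simp add: algebra_simps)
  also have "\<dots> \<le> \<bar>\<phi> s + \<phi> (2 * s) - \<phi> (s + \<eta>) - \<phi> (2 * s - \<eta>)\<bar>"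
    using assms(1) abs_ge_self[of "\<sigma> * _"] by (simp add: abs_mult)
  finally show ?thesis
    by simp
qed

lemma second_difference_bound_scaling:
  fixes L \<alpha> t :: real and k m n :: nat
  assumes "3 \<le> k" "real k \<le> 6 * real m" "0 < t" "0 \<le> L"
  defines "s \<equiv> t / real k"
  defines "\<eta> \<equiv> s / (4 * sqrt (real n))"
  shows "(L * 2 powr (\<alpha> - 2) * t powr \<alpha> / 48)\<^sup>2 * real k powr (2 - 2 * \<alpha>) / real n
           \<le> (real m * (\<eta> * (s / 2) * (L * (2 * s) powr (\<alpha> - 2))))\<^sup>2"
proof -
  define B where "B = L * 2 powr (\<alpha> - 2) * t powr \<alpha>"
  have "0 < s" "0 \<le> B"
    using assms(1,3,4) by (simp_all add: s_def B_def)
  have "s powr \<alpha> = s powr 2 * s powr (\<alpha> - 2)"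
    by (simp add: powr_add[symmetric])
  also have "s powr 2 = s * s"
    using \<open>0 < s\<close> by (simp add: power2_eq_square)
  finally have s_pow: "s * s * s powr (\<alpha> - 2) = t powr \<alpha> / real k powr \<alpha>"
    using assms(3) by (simp add: s_def powr_divide)
  have "\<eta> * (s / 2) * (L * (2 * s) powr (\<alpha> - 2))
      = L * 2 powr (\<alpha> - 2) * (s * s * s powr (\<alpha> - 2)) / (8 * sqrt (real n))"
    using \<open>0 < s\<close> by (simp add: \<eta>_def powr_mult field_simps)
  also have "\<dots> = B / (8 * sqrt (real n) * real k powr \<alpha>)"
    using assms(1) unfolding s_pow by (simp add: B_def field_simps)
  finally have gap: "\<eta> * (s / 2) * (L * (2 * s) powr (\<alpha> - 2)) = B / (8 * sqrt (real n) * real k powr \<alpha>)" .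
  have "(real k powr (1 - \<alpha>))\<^sup>2 = real k powr (2 - 2 * \<alpha>)"
    using assms(1) by (simp add: power2_eq_square powr_add[symmetric])
  then have "(B / 48)\<^sup>2 * real k powr (2 - 2 * \<alpha>) / real n
      = (real k / 6 * (B / (8 * sqrt (real n) * real k powr \<alpha>)))\<^sup>2"
    using assms(1) by (simp add: powr_diff power_mult_distrib power_divide mult_ac)
  also have "\<dots> \<le> (real m * (B / (8 * sqrt (real n) * real k powr \<alpha>)))\<^sup>2"
    using assms(2) \<open>0 \<le> B\<close> by (intro power_mono mult_right_mono) auto
  finally show ?thesis
    unfolding gap B_def .
qed

lemma minimax_risk_ge_of_curvature:
  fixes \<phi> \<phi>' \<phi>'' :: "real \<Rightarrow> real" and \<sigma> L \<alpha> p0 t :: real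
  assumes "3 \<le> k" "1 \<le> n" "\<bar>\<sigma>\<bar> = 1" "0 < L" "\<alpha> \<le> 2" "0 < t" "t \<le> 1/3" "2 * t \<le> p0"
    and deriv: "\<forall>x\<in>{0<..<1}. (\<phi> has_real_derivative \<phi>' x) (at x) \<and> (\<phi>' has_real_derivative \<phi>'' x) (at x)"
    and curv: "\<forall>x\<in>{0<..p0}. L * x powr (\<alpha> - 2) \<le> \<sigma> * \<phi>'' x"
  shows "ereal (7/64 * (L * 2 powr (\<alpha> - 2) * t powr \<alpha> / 48)\<^sup>2 * real k powr (2 - 2 * \<alpha>) / real n)
           \<le> minimax_risk n k \<phi>"
proof -
  define s where "s = t / real k"
  define m where "m = (k - 1) div 2"
  define \<eta> where "\<eta> = s / (4 * sqrt (real n))"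
  define gap where "gap = \<phi> s + \<phi> (2 * s) - \<phi> (s + \<eta>) - \<phi> (2 * s - \<eta>)"
  have "0 < s" "3 * s \<le> t"
    using assms(1,6) by (auto simp: s_def field_simps)
  have "2 * m < k" "real k \<le> 6 * real m"
    using assms(1) unfolding m_def by linarith+
  have "3 * real m * s \<le> 3 * (real k / 2) * s"
    using \<open>2 * m < k\<close> \<open>0 < s\<close> by (intro mult_right_mono) auto
  also have "\<dots> \<le> 1"
    using assms(1,7) by (simp add: s_def)
  finally have "3 * real m * s \<le> 1" .
  have "0 < \<eta>" "4 * \<eta> \<le> s"
    using assms(2) \<open>0 < s\<close> by (auto simp: \<eta>_def field_simps)
  then have "\<eta> * (s / 2) * (L * (2 * s) powr (\<alpha> - 2)) \<le> \<bar>gap\<bar>"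
    unfolding gap_def using assms(3-5,7,8) \<open>0 < s\<close> \<open>3 * s \<le> t\<close>
    by (intro second_difference_ge_of_curvature[OF _ _ _ _ _ _ _ _ deriv curv]) auto
  then have "real m * (\<eta> * (s / 2) * (L * (2 * s) powr (\<alpha> - 2))) \<le> real m * \<bar>gap\<bar>"
    by (rule mult_left_mono) simp
  then have "(real m * (\<eta> * (s / 2) * (L * (2 * s) powr (\<alpha> - 2))))\<^sup>2 \<le> (real m * \<bar>gap\<bar>)\<^sup>2"
    using assms(4) \<open>0 < s\<close> \<open>0 < \<eta>\<close> by (intro power_mono) auto
  also have "\<dots> = (real m * gap)\<^sup>2"
    by (simp add: power_mult_distrib)
  finally have "(real m * (\<eta> * (s / 2) * (L * (2 * s) powr (\<alpha> - 2))))\<^sup>2 \<le> (real m * gap)\<^sup>2" .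
  with second_difference_bound_scaling[OF assms(1) \<open>real k \<le> 6 * real m\<close> assms(6), of L \<alpha> n]
  have "7/64 * (L * 2 powr (\<alpha> - 2) * t powr \<alpha> / 48)\<^sup>2 * real k powr (2 - 2 * \<alpha>) / real n
      \<le> 7/64 * (real m * gap)\<^sup>2"
    using assms(4) unfolding s_def \<eta>_def by (simp add: mult.commute)
  also have "ereal \<dots> \<le> minimax_risk n k \<phi>"
    unfolding gap_def \<eta>_def
    using minimax_risk_ge_two_block_gap[OF \<open>2 * m < k\<close> \<open>0 < s\<close> \<open>3 * real m * s \<le> 1\<close> assms(2)] .
  finally show ?thesis
    by simp
qed

theorem theorem3:
  fixes \<alpha> W c c' :: real and \<phi> :: "real \<Rightarrow> real"
  assumes "0 < \<alpha>" "\<alpha> < 1"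
    and "\<forall>p\<in>{0..1}. 0 \<le> \<phi> p"
    and "\<exists>\<phi>' \<phi>''. (\<forall>x\<in>{0<..1}. (\<phi> has_real_derivative \<phi>' x) (at x within {0<..1})
                                 \<and> (\<phi>' has_real_derivative \<phi>'' x) (at x within {0<..1}))
                   \<and> continuous_on {0<..1} \<phi>''
                   \<and> (\<forall>p\<in>{0<..1}. (2 - \<alpha>) * W * p powr (\<alpha> - 2) + c' \<le> \<bar>\<phi>'' p\<bar>
                                 \<and> \<bar>\<phi>'' p\<bar> \<le> (2 - \<alpha>) * W * p powr (\<alpha> - 2) + c)"
    and "W > 0"
  shows "\<exists>C>0. \<forall>n k. n \<ge> 1 \<longrightarrow> k \<ge> 3 \<longrightarrow>
           ereal (C * real k powr (2 - 2 * \<alpha>) / real n) \<le> minimax_risk n k \<phi>"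
proof -
  obtain \<phi>' \<phi>'' where
    deriv_within: "\<forall>x\<in>{0<..1}. (\<phi> has_real_derivative \<phi>' x) (at x within {0<..1})
                              \<and> (\<phi>' has_real_derivative \<phi>'' x) (at x within {0<..1})"
    and cont: "continuous_on {0<..1} \<phi>''"
    and bound: "\<forall>p\<in>{0<..1}. (2 - \<alpha>) * W * p powr (\<alpha> - 2) + c' \<le> \<bar>\<phi>'' p\<bar>"
    using assms(4) by blast
  obtain p0 \<sigma> where "0 < p0" "\<bar>\<sigma>\<bar> = 1" and curv: "\<forall>x\<in>{0<..p0}. W / 2 * x powr (\<alpha> - 2) \<le> \<sigma> * \<phi>'' x"
    using curvature_sign_near_zero[of \<alpha> W \<phi>'' c'] assms(2,5) cont bound by auto
  have deriv: "\<forall>x\<in>{0<..<1}. (\<phi> has_real_derivative \<phi>' x) (at x) \<and> (\<phi>' has_real_derivative \<phi>'' x) (at x)"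
  proof
    fix x :: real assume "x \<in> {0<..<1}"
    then have "x \<in> {0<..1}" and at_x: "at x within {0<..1} = at x"
      by (auto intro: at_within_interior)
    from bspec[OF deriv_within this(1)]
    show "(\<phi> has_real_derivative \<phi>' x) (at x) \<and> (\<phi>' has_real_derivative \<phi>'' x) (at x)"
      unfolding at_x .
  qed
  define t where "t = min (1/3) (p0 / 2)"
  have "0 < t" "t \<le> 1/3" "2 * t \<le> p0"
    using \<open>0 < p0\<close> by (auto simp: t_def)
  define C where "C = 7/64 * (W / 2 * 2 powr (\<alpha> - 2) * t powr \<alpha> / 48)\<^sup>2"
  have "0 < C"
    using assms(5) \<open>0 < t\<close> by (simp add: C_def)
  moreover have "ereal (C * real k powr (2 - 2 * \<alpha>) / real n) \<le> minimax_risk n k \<phi>"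
    if "1 \<le> n" "3 \<le> k" for n k
    using minimax_risk_ge_of_curvature[OF that(2,1) \<open>\<bar>\<sigma>\<bar> = 1\<close> _ _ \<open>0 < t\<close> \<open>t \<le> 1/3\<close> \<open>2 * t \<le> p0\<close> deriv curv]
      assms(2,5) unfolding C_def by simp
  ultimately show ?thesis
    by blast
qed

end
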